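(* Let $k\ge 2$. For every deterministic algorithm that solves the $k$-ribbon problem on oriented line graphs of every length with identical agents (even when endpoints know they are endpoints), and for every $n$, there is an execution on a line of $n$ agents (some choice of starting agent) in which some agent has not decided its color before round $(2-\frac1k)n-3$.
   Context: Message passing model (1D): line of $n$ agents, synchronous rounds, reliable messages between neighbors, identical agents with a common sense of direction and no knowledge of $n$ or their position; initially only one arbitrary starting agent is awake and other agents wake upon receiving a message. The $k$-ribbon problem: every agent outputs a color in $\{1,\dots,k\}$ with each color class contiguous, colors increasing from left to right, and class sizes differing by at most $1$. *)

theory Defs
  imports Complex_Main
begin

text \<open>A deterministic distributed algorithm for identical agents on an oriented line. Agent positions are 0..n-1, 0 = leftmost.
  The two boolean flags tell an agent whether it has a left / right neighbour
  (so endpoints know they are endpoints).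
  - alg_init: state of the spontaneously awake starting agent at time 0;
  - alg_wake: state of a sleeping agent after it receives its first message(s)
      (messages from left / right neighbour, at least one present);
  - alg_send: messages an awake agent sends to its left / right neighbour in a round;
  - alg_trans: state update of an awake agent given received messages (left, right);
  - alg_out: decided colour (None = undecided).\<close>

record ('s, 'm) alg =
  alg_init  :: "bool \<Rightarrow> bool \<Rightarrow> 's"
  alg_wake  :: "bool \<Rightarrow> bool \<Rightarrow> 'm option \<Rightarrow> 'm option \<Rightarrow> 's"
  alg_send  :: "'s \<Rightarrow> 'm option \<times> 'm option"
  alg_trans :: "'s \<Rightarrow> 'm option \<Rightarrow> 'm option \<Rightarrow> 's"
  alg_out   :: "'s \<Rightarrow> nat option"

text \<open>Configuration: state of each agent, None = asleep.\<close>

definition msg_from_left :: "('s, 'm) alg \<Rightarrow> (nat \<Rightarrow> 's option) \<Rightarrow> nat \<Rightarrow> 'm option" where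
  "msg_from_left A c i =
     (if i = 0 then None else
      (case c (i - 1) of None \<Rightarrow> None | Some st \<Rightarrow> snd (alg_send A st)))"

definition msg_from_right :: "('s, 'm) alg \<Rightarrow> nat \<Rightarrow> (nat \<Rightarrow> 's option) \<Rightarrow> nat \<Rightarrow> 'm option" where
  "msg_from_right A n c i =
     (if i + 1 \<ge> n then None else
      (case c (i + 1) of None \<Rightarrow> None | Some st \<Rightarrow> fst (alg_send A st)))"

definition step :: "('s, 'm) alg \<Rightarrow> nat \<Rightarrow> (nat \<Rightarrow> 's option) \<Rightarrow> (nat \<Rightarrow> 's option)" where
  "step A n c = (\<lambda>i. if i < n then
      (let mL = msg_from_left A c i; mR = msg_from_right A n c i in
       case c i of
         Some st \<Rightarrow> Some (alg_trans A st mL mR)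
       | None \<Rightarrow> (if mL = None \<and> mR = None then None
                  else Some (alg_wake A (0 < i) (i + 1 < n) mL mR)))
    else None)"

fun run :: "('s, 'm) alg \<Rightarrow> nat \<Rightarrow> nat \<Rightarrow> nat \<Rightarrow> (nat \<Rightarrow> 's option)" where
  "run A n s 0 = (\<lambda>i. if i = s \<and> i < n then Some (alg_init A (0 < i) (i + 1 < n)) else None)"
| "run A n s (Suc t) = step A n (run A n s t)"

definition agent_output :: "('s, 'm) alg \<Rightarrow> nat \<Rightarrow> nat \<Rightarrow> nat \<Rightarrow> nat \<Rightarrow> nat option" where
  "agent_output A n s t i = (case run A n s t i of None \<Rightarrow> None | Some st \<Rightarrow> alg_out A st)"

text \<open>k-ribbon colouring of agents 0..n-1 (0 leftmost): colours in {1..k}, non-decreasing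
  left to right (hence each class contiguous and colours increasing), class sizes differ by
  at most one.\<close>

definition is_ribbon :: "nat \<Rightarrow> nat \<Rightarrow> (nat \<Rightarrow> nat) \<Rightarrow> bool" where
  "is_ribbon k n c \<longleftrightarrow>
     (\<forall>i<n. 1 \<le> c i \<and> c i \<le> k) \<and>
     (\<forall>i j. i \<le> j \<and> j < n \<longrightarrow> c i \<le> c j) \<and>
     (\<forall>a\<in>{1..k}. \<forall>b\<in>{1..k}.
        card {i. i < n \<and> c i = a} \<le> card {i. i < n \<and> c i = b} + 1)"

definition solves_ribbon :: "('s, 'm) alg \<Rightarrow> nat \<Rightarrow> bool" where
  "solves_ribbon A k \<longleftrightarrow>
     (\<forall>n s. 1 \<le> n \<and> s < n \<longrightarrow>
        (\<exists>c. is_ribbon k n c \<and>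
           (\<forall>i<n. (\<exists>t. agent_output A n s t i = Some (c i)) \<and>
                  (\<forall>t v. agent_output A n s t i = Some v \<longrightarrow> v = c i) \<and>
                  (\<forall>t. agent_output A n s t i \<noteq> None \<longrightarrow> agent_output A n s (Suc t) i \<noteq> None))))"

end

theory Submission
  imports Defs
begin

text \<open>Start the algorithm at the left end. Information travels one agent per round, so up to
  round \<open>2n - i - 3\<close> agent \<open>i\<close> cannot tell the line of length \<open>n\<close> from any longer line: the
  wake-up wave needs \<open>n - 1\<close> rounds to reach the right end and \<open>n - 1 - i\<close> more to report back.
  For \<open>i = \<lceil>n/k\<rceil>\<close> agent \<open>i\<close> lies outside colour class 1 on the line of length \<open>n\<close> (that class has
  at most \<open>\<lceil>n/k\<rceil>\<close> members) but inside it on the line of length \<open>k(i + 2)\<close>, so it cannot have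
  decided before round \<open>2n - \<lceil>n/k\<rceil> - 2 \<ge> (2 - 1/k)n - 3\<close>.\<close>

lemma run_from_left_end_asleep:
  "t < i \<Longrightarrow> run A n 0 t i = None"
proof (induction t arbitrary: i)
  case (Suc t)
  then have "msg_from_left A (run A n 0 t) i = None" "msg_from_right A n (run A n 0 t) i = None"
    by (auto simp: msg_from_left_def msg_from_right_def split: option.splits)
  with Suc show ?case by (simp add: step_def Let_def)
qed simp

lemma run_from_left_end_longer_line:
  assumes "n \<le> n'" and "i + t + 2 < 2 * n"
  shows "run A n 0 t i = run A n' 0 t i"
  using assms(2)
proof (induction t arbitrary: i)
  case (Suc t)
  show ?case
  proof (cases "Suc t < i")
    case True
    then show ?thesis by (simp only: run_from_left_end_asleep)
  next
    case False
    then have inside: "i < n" "i < n'" "i + 1 < n" "i + 1 < n'"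
      using Suc.prems assms(1) by auto
    have same_state: "run A n 0 t j = run A n' 0 t j" if "j \<le> i + 1" for j
      using Suc.IH Suc.prems that by simp
    have "msg_from_left A (run A n 0 t) i = msg_from_left A (run A n' 0 t) i"
      using same_state[of "i - 1"] by (simp add: msg_from_left_def)
    moreover have "msg_from_right A n (run A n 0 t) i = msg_from_right A n' (run A n' 0 t) i"
      using same_state[of "i + 1"] inside by (simp add: msg_from_right_def)
    ultimately show ?thesis
      using same_state[of i] inside by (simp add: step_def Let_def split: option.split)
  qed
qed (use assms(1) in auto)

lemma ribbon_class_cards_sum:
  fixes c :: "nat \<Rightarrow> nat"
  assumes "\<forall>j<n. 1 \<le> c j \<and> c j \<le> k"
  shows "(\<Sum>a\<in>{1..k}. card {j. j < n \<and> c j = a}) = n"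
proof -
  have "{..<n} = (\<Union>a\<in>{1..k}. {j. j < n \<and> c j = a})"
    using assms by auto
  moreover have "card (\<Union>a\<in>{1..k}. {j. j < n \<and> c j = a}) = (\<Sum>a\<in>{1..k}. card {j. j < n \<and> c j = a})"
    by (intro card_UN_disjoint) auto
  ultimately show ?thesis
    by (metis card_lessThan)
qed

lemma ribbon_class_card_bounds:
  assumes "is_ribbon k n c" and "a \<in> {1..k}"
  shows "k * card {j. j < n \<and> c j = a} \<le> n + k - 1"
    and "n \<le> k * card {j. j < n \<and> c j = a} + k - 1"
proof -
  define f where "f b = card {j. j < n \<and> c j = b}" for b
  define B where "B = {1..k} - {a}"
  have range: "\<forall>j<n. 1 \<le> c j \<and> c j \<le> k"
    and balanced: "\<And>b b'. b \<in> {1..k} \<Longrightarrow> b' \<in> {1..k} \<Longrightarrow> f b \<le> f b' + 1"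
    using assms(1) unfolding is_ribbon_def f_def by auto
  have card_B: "card B = k - 1"
    using assms(2) unfolding B_def by simp
  have n_split: "n = f a + sum f B"
    using ribbon_class_cards_sum[OF range] assms(2)
    unfolding B_def f_def by (simp add: sum.remove)
  have "sum f B \<le> (k - 1) * (f a + 1)"
    using sum_bounded_above[of B f "f a + 1"] balanced assms(2) card_B unfolding B_def by auto
  moreover have "(k - 1) * f a \<le> sum (\<lambda>b. f b + 1) B"
    using sum_bounded_below[of B "f a" "\<lambda>b. f b + 1"] balanced assms(2) card_B
    unfolding B_def by auto
  moreover have "sum (\<lambda>b. f b + 1) B = sum f B + (k - 1)"
    by (simp add: sum.distrib card_B del: add_Suc_right Suc_eq_plus1 plus_1_eq_Suc)
  moreover obtain k' where "k = Suc k'"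
    using assms(2) by (cases k) auto
  ultimately show "k * f a \<le> n + k - 1" and "n \<le> k * f a + k - 1"
    using n_split by (simp_all add: algebra_simps)
qed

lemma ribbon_colour_1_iff:
  assumes "is_ribbon k n c" and "i < n"
  shows "c i = 1 \<longleftrightarrow> i < card {j. j < n \<and> c j = 1}"
proof -
  have mono: "\<And>j j'. j \<le> j' \<Longrightarrow> j' < n \<Longrightarrow> c j \<le> c j'"
    and pos: "\<And>j. j < n \<Longrightarrow> 1 \<le> c j"
    using assms(1) unfolding is_ribbon_def by auto
  show ?thesis
  proof
    assume "c i = 1"
    have "{..i} \<subseteq> {j. j < n \<and> c j = 1}"
    proof
      fix j assume "j \<in> {..i}"
      then show "j \<in> {j. j < n \<and> c j = 1}"
        using mono[of j i] pos[of j] assms(2) \<open>c i = 1\<close> by auto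
    qed
    from card_mono[OF _ this] show "i < card {j. j < n \<and> c j = 1}"
      by simp
  next
    assume "i < card {j. j < n \<and> c j = 1}"
    show "c i = 1"
    proof (rule ccontr)
      assume "c i \<noteq> 1"
      have "{j. j < n \<and> c j = 1} \<subseteq> {..<i}"
      proof
        fix j assume "j \<in> {j. j < n \<and> c j = 1}"
        then show "j \<in> {..<i}"
          using mono[of i j] pos[of i] \<open>c i \<noteq> 1\<close> by (cases "i \<le> j") auto
      qed
      from card_mono[OF _ this] \<open>i < card _\<close> show False
        by simp
    qed
  qed
qed

lemma solves_ribbon_decisions:
  assumes "solves_ribbon A k" and "s < n"
  obtains c where "is_ribbon k n c"
    and "\<And>i t v. i < n \<Longrightarrow> agent_output A n s t i = Some v \<Longrightarrow> v = c i"
proof -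
  have "1 \<le> n \<and> s < n"
    using assms(2) by simp
  from assms(1)[unfolded solves_ribbon_def, rule_format, OF this]
  obtain c where "is_ribbon k n c"
      and "\<forall>i<n. \<forall>t v. agent_output A n s t i = Some v \<longrightarrow> v = c i"
    by auto
  with that show ?thesis
    by simp
qed

lemma ribbon_undecided_while_indistinguishable:
  assumes "solves_ribbon A k" and "k \<ge> 1"
    and "i < n" and "n \<le> k * i" and "i + t + 2 < 2 * n"
  shows "agent_output A n 0 t i = None"
proof (rule ccontr)
  assume "agent_output A n 0 t i \<noteq> None"
  then obtain v where decided: "agent_output A n 0 t i = Some v"
    by blast
  define n' where "n' = k * (i + 2)"
  have "n \<le> n'" and "i < n'"
    using assms(2-4) unfolding n'_def by (auto simp: algebra_simps)
  then have decided': "agent_output A n' 0 t i = Some v"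
    using decided run_from_left_end_longer_line[OF \<open>n \<le> n'\<close> assms(5), of A]
    by (simp add: agent_output_def)
  have "0 < n" and "0 < n'"
    using assms(3) \<open>i < n'\<close> by simp_all
  obtain c where c: "is_ribbon k n c"
      and "\<And>j t v. j < n \<Longrightarrow> agent_output A n 0 t j = Some v \<Longrightarrow> v = c j"
    using solves_ribbon_decisions[OF assms(1) \<open>0 < n\<close>] by blast
  with decided assms(3) have "v = c i"
    by blast
  obtain c' where c': "is_ribbon k n' c'"
      and "\<And>j t v. j < n' \<Longrightarrow> agent_output A n' 0 t j = Some v \<Longrightarrow> v = c' j"
    using solves_ribbon_decisions[OF assms(1) \<open>0 < n'\<close>] by blast
  with decided' \<open>i < n'\<close> have "v = c' i"
    by blast
  have "k * card {j. j < n \<and> c j = 1} < k * (i + 1)"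
    using ribbon_class_card_bounds(1)[OF c, of 1] assms(2,4) by simp
  then have "\<not> i < card {j. j < n \<and> c j = 1}"
    unfolding mult_less_cancel1 by simp
  then have "c i \<noteq> 1"
    using ribbon_colour_1_iff[OF c assms(3)] by simp
  moreover have "k * (i + 1) < k * card {j. j < n' \<and> c' j = 1}"
    using ribbon_class_card_bounds(2)[OF c', of 1] assms(2) unfolding n'_def by simp
  then have "i < card {j. j < n' \<and> c' j = 1}"
    unfolding mult_less_cancel1 by simp
  then have "c' i = 1"
    using ribbon_colour_1_iff[OF c' \<open>i < n'\<close>] by simp
  ultimately show False
    using \<open>v = c i\<close> \<open>v = c' i\<close> by simp
qed

lemma round_add_less_double_if_below_bound:
  assumes "k \<ge> 1" and "k * i \<le> n + k - 1"
    and "real t < (2 - 1 / real k) * real n - 3"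
  shows "i + t + 2 < 2 * n"
proof -
  have "real (k * i) \<le> real (n + k - 1)"
    using assms(2) by (simp only: of_nat_le_iff)
  then have "real k * real i \<le> real n + real k - 1"
    using assms(1) by (simp add: of_nat_diff)
  then have "real i \<le> (real n + real k - 1) / real k"
    using assms(1) by (simp add: pos_le_divide_eq mult.commute)
  also have "\<dots> = real n / real k + 1 - 1 / real k"
    using assms(1) by (simp add: diff_divide_distrib add_divide_distrib)
  moreover have "(2 - 1 / real k) * real n = 2 * real n - real n / real k"
    by (simp add: algebra_simps)
  moreover have "0 < 1 / real k"
    using assms(1) by simp
  ultimately have "real i + real t + 2 < 2 * real n"
    using assms(3) by linarith
  then show ?thesis
    by linarith
qed

lemma round_up_div_bounds:
  fixes k n :: nat
  assumes "k \<ge> 2" and "n \<ge> 2"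
  shows "n \<le> k * ((n + k - 1) div k)" and "k * ((n + k - 1) div k) \<le> n + k - 1"
    and "(n + k - 1) div k < n"
proof -
  have "k * ((n + k - 1) div k) + (n + k - 1) mod k = n + k - 1"
    by (simp only: mult_div_mod_eq)
  moreover have "(n + k - 1) mod k < k"
    using assms(1) by simp
  ultimately show "n \<le> k * ((n + k - 1) div k)" and "k * ((n + k - 1) div k) \<le> n + k - 1"
    by linarith+
  moreover have "n + k - 1 < k * n"
    using assms mult_le_mono1[of 2 k "n - 1"] by (simp add: diff_mult_distrib2)
  ultimately have "k * ((n + k - 1) div k) < k * n"
    by linarith
  then show "(n + k - 1) div k < n"
    by simp
qed

theorem theorem7:
  fixes A :: "('s, 'm) alg" and k n :: nat
  assumes "k \<ge> 2" and "solves_ribbon A k" and "n \<ge> 1"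
  shows "\<exists>s<n. \<exists>i<n. \<forall>t. real t < (2 - 1 / real k) * real n - 3 \<longrightarrow> agent_output A n s t i = None"
proof (cases "n = 1")
  case True
  have "(2 - 1 / real k) * real n - 3 = - 1 - 1 / real k"
    using True by simp
  moreover have "0 \<le> 1 / real k"
    by simp
  ultimately have "(2 - 1 / real k) * real n - 3 < 0"
    by linarith
  with True show ?thesis
    by auto
next
  case False
  define i where "i = (n + k - 1) div k"
  have "n \<le> k * i" and round_up: "k * i \<le> n + k - 1" and "i < n"
    using round_up_div_bounds[of k n] False assms(1,3) unfolding i_def by simp_all
  have "\<forall>t. real t < (2 - 1 / real k) * real n - 3 \<longrightarrow> agent_output A n 0 t i = None"
    using ribbon_undecided_while_indistinguishable[OF assms(2) _ \<open>i < n\<close> \<open>n \<le> k * i\<close>]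
      round_add_less_double_if_below_bound[OF _ round_up] assms(1) by simp
  moreover have "0 < n"
    using \<open>i < n\<close> by simp
  ultimately show ?thesis
    using \<open>i < n\<close> by (intro exI[of _ 0] exI[of _ i] conjI)
qed

end
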